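(* Let $(\mathfrak{g},[\cdot,\cdot,\cdot],\varepsilon,\alpha)$ be a $3$-Hom-Lie color algebra and $\mathcal{N}$ a bijective Nijenhuis operator on it. Let $a\in\mathfrak{g}_0$ with $\alpha(a)=a$ and $\mathcal{N}(a)\in Z(\mathfrak{g})$. Then $\mathcal{N}$ is a Nijenhuis operator on the Hom-Lie color algebra $(\mathfrak{g},\{\cdot,\cdot\},\varepsilon,\alpha)$, where $\{x,y\}=[a,x,y]$; that is, $\{\mathcal{N}x,\mathcal{N}y\}=\mathcal{N}\{\mathcal{N}x,y\}+\mathcal{N}\{x,\mathcal{N}y\}-\mathcal{N}^2\{x,y\}$ for all $x,y\in\mathfrak{g}$.
   Context: $\mathbb{K}$ is a field of characteristic zero and $\Gamma$ an abelian group; $\mathfrak{g}_0$ is the degree-$0$ component. A bicharacter is a map $\varepsilon:\Gamma\times\Gamma\to\mathbb{K}\setminus\{0\}$ with $\varepsilon(a,b)\varepsilon(b,a)=1$, $\varepsilon(a,b+c)=\varepsilon(a,b)\varepsilon(a,c)$, $\varepsilon(a+b,c)=\varepsilon(a,c)\varepsilon(b,c)$. For homogeneous $x,y$, $\varepsilon(x,y)=\varepsilon(|x|,|y|)$ and $\varepsilon(x,y_1+\dots+y_k)=\varepsilon(|x|,|y_1|+\dots+|y_k|)$. A $3$-Hom-Lie color algebra $(\mathfrak{g},[\cdot,\cdot,\cdot],\varepsilon,\alpha)$ is a $\Gamma$-graded vector space with a trilinear bracket of degree zero, a bicharacter $\varepsilon$ and a degree-zero linear map $\alpha$ such that for homogeneous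 elements: (i) $[x_1,\ldots,x_i,x_{i+1},\ldots,x_3]=-\varepsilon(x_i,x_{i+1})[x_1,\ldots,x_{i+1},x_i,\ldots,x_3]$; (ii) $[\alpha(x_1),\alpha(x_2),[y_1,y_2,y_3]]=\sum_{i=1}^3\varepsilon(x_1+x_2,y_1+\dots+y_{i-1})[\alpha(y_1),\ldots,\alpha(y_{i-1}),[x_1,x_2,y_i],\alpha(y_{i+1}),\ldots,\alpha(y_3)]$. The center is $Z(\mathfrak{g})=\{x:[x,y_1,y_2]=0\ \forall y_1,y_2\}$. A degree-zero linear map $\mathcal{N}$ is a Nijenhuis operator on the $3$-ary algebra if $\mathcal{N}\alpha=\alpha\mathcal{N}$ and $[\mathcal{N}x_1,\mathcal{N}x_2,\mathcal{N}x_3]=\mathcal{N}([x_1,x_2,x_3]^2_{\mathcal{N}})$, where $[x]^1_{\mathcal{N}}=\sum_i[\ldots,\mathcal{N}x_i,\ldots]-\mathcal{N}[x_1,x_2,x_3]$ and $[x]^2_{\mathcal{N}}=\sum_{i<j}[\ldots,\mathcal{N}x_i,\ldots,\mathcal{N}x_j,\ldots]-\mathcal{N}([x]^1_{\mathcal{N}})$. A Nijenhuis operator on a Hom-Lie color algebra $(\mathfrak{g},\{\cdot,\cdot\},\varepsilon,\alpha)$ is a degree-zero linear $\mathcal{N}$ with $\mathcal{N}\alpha=\alpha\mathcal{N}$ satisfying the displayed identity. *)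

theory Defs
  imports Complex_Main
begin

text \<open>The Gamma-grading
  is a family V of subspaces indexed by the abelian group 'g with
  'v the internal direct sum of the V d.  "x homogeneous of degree d" means x in V d.\<close>

definition bicharacter :: "('g::ab_group_add \<Rightarrow> 'g \<Rightarrow> 'k::field) \<Rightarrow> bool" where
  "bicharacter eps \<longleftrightarrow>
     (\<forall>a b. eps a b \<noteq> 0) \<and>
     (\<forall>a b. eps a b * eps b a = 1) \<and>
     (\<forall>a b c. eps a (b + c) = eps a b * eps a c) \<and>
     (\<forall>a b c. eps (a + b) c = eps a c * eps b c)"

definition graded_space :: "('k::field \<Rightarrow> 'v::ab_group_add \<Rightarrow> 'v) \<Rightarrow> ('g \<Rightarrow> 'v set) \<Rightarrow> bool" where
  "graded_space scale V \<longleftrightarrow>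
     Vector_Spaces.vector_space scale \<and>
     (\<forall>d. 0 \<in> V d \<and> (\<forall>x\<in>V d. \<forall>y\<in>V d. x + y \<in> V d) \<and> (\<forall>c. \<forall>x\<in>V d. scale c x \<in> V d)) \<and>
     (\<forall>x. \<exists>!f. finite {d. f d \<noteq> 0} \<and> (\<forall>d. f d \<in> V d) \<and> x = sum f {d. f d \<noteq> 0})"

definition degree_zero :: "('g \<Rightarrow> 'v set) \<Rightarrow> ('v \<Rightarrow> 'v) \<Rightarrow> bool" where
  "degree_zero V f \<longleftrightarrow> (\<forall>d x. x \<in> V d \<longrightarrow> f x \<in> V d)"

definition trilinear :: "('k::field \<Rightarrow> 'v::ab_group_add \<Rightarrow> 'v) \<Rightarrow> ('v \<Rightarrow> 'v \<Rightarrow> 'v \<Rightarrow> 'v) \<Rightarrow> bool" where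
  "trilinear scale br \<longleftrightarrow>
     (\<forall>y z. Vector_Spaces.linear scale scale (\<lambda>x. br x y z)) \<and>
     (\<forall>x z. Vector_Spaces.linear scale scale (\<lambda>y. br x y z)) \<and>
     (\<forall>x y. Vector_Spaces.linear scale scale (\<lambda>z. br x y z))"

definition hom_lie_3_color_algebra ::
  "('k::field \<Rightarrow> 'v::ab_group_add \<Rightarrow> 'v) \<Rightarrow> ('g::ab_group_add \<Rightarrow> 'v set) \<Rightarrow>
   ('v \<Rightarrow> 'v \<Rightarrow> 'v \<Rightarrow> 'v) \<Rightarrow> ('g \<Rightarrow> 'g \<Rightarrow> 'k) \<Rightarrow> ('v \<Rightarrow> 'v) \<Rightarrow> bool" where
  "hom_lie_3_color_algebra scale V br eps alpha \<longleftrightarrow>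
     graded_space scale V \<and> bicharacter eps \<and> trilinear scale br \<and>
     (\<forall>a b c x y z. x \<in> V a \<longrightarrow> y \<in> V b \<longrightarrow> z \<in> V c \<longrightarrow> br x y z \<in> V (a + b + c)) \<and>
     Vector_Spaces.linear scale scale alpha \<and> degree_zero V alpha \<and>
     (\<forall>a b c x y z. x \<in> V a \<longrightarrow> y \<in> V b \<longrightarrow> z \<in> V c \<longrightarrow>
        br x y z = - scale (eps a b) (br y x z) \<and>
        br x y z = - scale (eps b c) (br x z y)) \<and>
     (\<forall>a1 a2 b1 b2 b3 x1 x2 y1 y2 y3.
        x1 \<in> V a1 \<longrightarrow> x2 \<in> V a2 \<longrightarrow> y1 \<in> V b1 \<longrightarrow> y2 \<in> V b2 \<longrightarrow> y3 \<in> V b3 \<longrightarrow>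
        br (alpha x1) (alpha x2) (br y1 y2 y3) =
          br (br x1 x2 y1) (alpha y2) (alpha y3)
        + scale (eps (a1 + a2) b1) (br (alpha y1) (br x1 x2 y2) (alpha y3))
        + scale (eps (a1 + a2) (b1 + b2)) (br (alpha y1) (alpha y2) (br x1 x2 y3)))"

definition nij_br1 :: "('v::ab_group_add \<Rightarrow> 'v \<Rightarrow> 'v \<Rightarrow> 'v) \<Rightarrow> ('v \<Rightarrow> 'v) \<Rightarrow> 'v \<Rightarrow> 'v \<Rightarrow> 'v \<Rightarrow> 'v" where
  "nij_br1 br N x1 x2 x3 =
     br (N x1) x2 x3 + br x1 (N x2) x3 + br x1 x2 (N x3) - N (br x1 x2 x3)"

definition nij_br2 :: "('v::ab_group_add \<Rightarrow> 'v \<Rightarrow> 'v \<Rightarrow> 'v) \<Rightarrow> ('v \<Rightarrow> 'v) \<Rightarrow> 'v \<Rightarrow> 'v \<Rightarrow> 'v \<Rightarrow> 'v" where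
  "nij_br2 br N x1 x2 x3 =
     br (N x1) (N x2) x3 + br (N x1) x2 (N x3) + br x1 (N x2) (N x3) - N (nij_br1 br N x1 x2 x3)"

definition nijenhuis_3 ::
  "('k::field \<Rightarrow> 'v::ab_group_add \<Rightarrow> 'v) \<Rightarrow> ('g \<Rightarrow> 'v set) \<Rightarrow>
   ('v \<Rightarrow> 'v \<Rightarrow> 'v \<Rightarrow> 'v) \<Rightarrow> ('v \<Rightarrow> 'v) \<Rightarrow> ('v \<Rightarrow> 'v) \<Rightarrow> bool" where
  "nijenhuis_3 scale V br alpha N \<longleftrightarrow>
     Vector_Spaces.linear scale scale N \<and> degree_zero V N \<and> N \<circ> alpha = alpha \<circ> N \<and>
     (\<forall>x1 x2 x3. br (N x1) (N x2) (N x3) = N (nij_br2 br N x1 x2 x3))"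

definition center3 :: "('v::zero \<Rightarrow> 'v \<Rightarrow> 'v \<Rightarrow> 'v) \<Rightarrow> 'v set" where
  "center3 br = {x. \<forall>y1 y2. br x y1 y2 = 0}"

definition nijenhuis_2 ::
  "('k::field \<Rightarrow> 'v::ab_group_add \<Rightarrow> 'v) \<Rightarrow> ('g \<Rightarrow> 'v set) \<Rightarrow>
   ('v \<Rightarrow> 'v \<Rightarrow> 'v) \<Rightarrow> ('v \<Rightarrow> 'v) \<Rightarrow> ('v \<Rightarrow> 'v) \<Rightarrow> bool" where
  "nijenhuis_2 scale V br alpha N \<longleftrightarrow>
     Vector_Spaces.linear scale scale N \<and> degree_zero V N \<and> N \<circ> alpha = alpha \<circ> N \<and>
     (\<forall>x y. br (N x) (N y) = N (br (N x) y) + N (br x (N y)) - N (N (br x y)))"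

end

theory Submission
  imports Defs
begin

text \<open>Put x1 = a in the ternary Nijenhuis identity. As N a is central, its left-hand
  side and every term of nij_br2 in which N hits a vanish, so injectivity of N strips the
  outer N and leaves the binary identity for {x, y} = [a, x, y].\<close>

lemma nij_br2_central_image_eq_0:
  assumes "nijenhuis_3 scale V br alpha N" and "inj N" and "N a \<in> center3 br"
  shows "nij_br2 br N a x y = 0"
proof -
  interpret N: module_hom scale scale N
    using assms(1) by (simp add: nijenhuis_3_def linear_iff_module_hom)
  have "N (nij_br2 br N a x y) = br (N a) (N x) (N y)"
    using assms(1) by (simp add: nijenhuis_3_def)
  also have "\<dots> = N 0"
    using assms(3) by (simp add: center3_def)
  finally show ?thesis
    by (rule injD[OF assms(2)])
qed

lemma nijenhuis_3_central_image_binary: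
  assumes "nijenhuis_3 scale V br alpha N" and "inj N" and "N a \<in> center3 br"
  shows "br a (N x) (N y) = N (br a (N x) y) + N (br a x (N y)) - N (N (br a x y))"
proof -
  interpret N: module_hom scale scale N
    using assms(1) by (simp add: nijenhuis_3_def linear_iff_module_hom)
  have central: "\<And>y z. br (N a) y z = 0"
    using assms(3) by (simp add: center3_def)
  have "nij_br2 br N a x y = 0"
    using nij_br2_central_image_eq_0[OF assms] .
  then show ?thesis
    by (simp add: nij_br2_def nij_br1_def central N.add N.diff)
qed

theorem corollary6p5:
  fixes scale :: "'k::field_char_0 \<Rightarrow> 'v::ab_group_add \<Rightarrow> 'v"
    and V :: "'g::ab_group_add \<Rightarrow> 'v set"
    and br :: "'v \<Rightarrow> 'v \<Rightarrow> 'v \<Rightarrow> 'v"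
    and eps :: "'g \<Rightarrow> 'g \<Rightarrow> 'k"
    and alpha N :: "'v \<Rightarrow> 'v"
    and a :: 'v
  assumes "hom_lie_3_color_algebra scale V br eps alpha"
    and "nijenhuis_3 scale V br alpha N"
    and "bij N"
    and "a \<in> V 0"
    and "alpha a = a"
    and "N a \<in> center3 br"
  shows "nijenhuis_2 scale V (\<lambda>x y. br a x y) alpha N"
  using assms(2) nijenhuis_3_central_image_binary[OF assms(2) bij_is_inj[OF assms(3)] assms(6)]
  by (simp add: nijenhuis_3_def nijenhuis_2_def)

end
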